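(* Consider the $T$-round online first-price auction problem described in the context. For any integer $L_T\in\{1,\dots,T\}$ with $L_T\le\frac T3$, \[ \inf_{\pi\in\Pi}\ \sup_{(v_t,m_t)_{t=1}^T\in\mathcal{L}}\mathbb{E}[\mathrm{DR}_T(\pi)]\ge\frac{L_T}{8}. \]
   Context: Online first-price auction over $T$ rounds: at each round $t$ the learner observes a private value $v_t\in[0,1]$, submits a bid $b_t\in[0,1]$, then observes $m_t\in[0,1]$, the highest bid of the other bidders, and receives reward $r(b_t;v_t,m_t)$ with $r(b;v,m)\coloneqq(v-b)\mathbbm{1}(b\ge m)$. An admissible policy $\pi\in\Pi$ is a sequence of measurable functions $\pi_t$ with $b_t=\pi_t((v_s,m_s)_{s=1}^{t-1},v_t,U)$, where $U$ is the learner's internal random variable. The expected dynamic regret is $\mathbb{E}[\mathrm{DR}_T(\pi)]\coloneqq\sum_{t=1}^T\max\{v_t-m_t,0\}-\sum_{t=1}^T\mathbb{E}[r(b_t;v_t,m_t)]$. $\mathcal{L}\coloneqq\{(v_t,m_t)_{t=1}^T\in[0,1]^{2T}:\sum_{t=2}^T\mathbbm{1}(m_t\ne m_{t-1})\le L_T\}$. *)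

theory Defs
  imports "HOL-Probability.Probability"
begin

text \<open>Reward of bidding b with value v when the highest competing bid is m.\<close>
definition reward :: "real \<Rightarrow> real \<Rightarrow> real \<Rightarrow> real" where
  "reward b v m = (if b \<ge> m then v - b else 0)"

definition history :: "(nat \<Rightarrow> real) \<Rightarrow> (nat \<Rightarrow> real) \<Rightarrow> nat \<Rightarrow> (real \<times> real) list" where
  "history v m t = map (\<lambda>s. (v s, m s)) [1..<t]"

text \<open>Admissible policies: a bid function for each round t, taking the history,
  the current value and the internal randomness u (drawn from the probability space M),
  measurable in u and with bids in [0,1].\<close>
definition admissible :: "'u measure \<Rightarrow> (nat \<Rightarrow> (real \<times> real) list \<Rightarrow> real \<Rightarrow> 'u \<Rightarrow> real) \<Rightarrow> bool" where
  "admissible M \<pi> \<longleftrightarrow>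
     (\<forall>t h x. (\<lambda>u. \<pi> t h x u) \<in> borel_measurable M) \<and>
     (\<forall>t h x. \<forall>u\<in>space M. 0 \<le> \<pi> t h x u \<and> \<pi> t h x u \<le> 1)"

definition env_set :: "nat \<Rightarrow> nat \<Rightarrow> ((nat \<Rightarrow> real) \<times> (nat \<Rightarrow> real)) set" where
  "env_set T L = {(v, m). (\<forall>t\<in>{1..T}. 0 \<le> v t \<and> v t \<le> 1 \<and> 0 \<le> m t \<and> m t \<le> 1) \<and>
                   card {t\<in>{2..T}. m t \<noteq> m (t - 1)} \<le> L}"

definition exp_dyn_regret ::
  "'u measure \<Rightarrow> (nat \<Rightarrow> (real \<times> real) list \<Rightarrow> real \<Rightarrow> 'u \<Rightarrow> real) \<Rightarrow> nat
     \<Rightarrow> (nat \<Rightarrow> real) \<Rightarrow> (nat \<Rightarrow> real) \<Rightarrow> real" where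
  "exp_dyn_regret M \<pi> T v m =
     (\<Sum>t=1..T. max (v t - m t) 0)
     - (\<Sum>t=1..T. \<integral>u. reward (\<pi> t (history v m t) (v t) u) (v t) (m t) \<partial>M)"

end

theory Submission
  imports Defs
begin

text \<open>A fixed policy can be simulated by the adversary. Take value 1 in every round and let the
  highest competing bid of round t be 0 if the expected bid of the policy (given the history
  so far) is at least 1/4, and 1/2 otherwise. In the first case the learner pays its expected
  bid, in the second its expected reward is at most its expected bid, which is below 1/4,
  while the benchmark is 1/2. So each of the first L rounds costs at least 1/4, and freezing
  the competing bid afterwards keeps the number of its changes below L. This even gives L/4.\<close>

definition random_bid :: "'u measure \<Rightarrow> ('u \<Rightarrow> real) \<Rightarrow> bool" where
  "random_bid M b \<longleftrightarrow> b \<in> borel_measurable M \<and> (\<forall>u\<in>space M. 0 \<le> b u \<and> b u \<le> 1)"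

lemma admissible_random_bid: "admissible M \<pi> \<Longrightarrow> random_bid M (\<pi> t h x)"
  unfolding admissible_def random_bid_def by blast

definition round_regret :: "'u measure \<Rightarrow> ('u \<Rightarrow> real) \<Rightarrow> real \<Rightarrow> real \<Rightarrow> real" where
  "round_regret M b v m = max (v - m) 0 - (\<integral>u. reward (b u) v m \<partial>M)"

lemma exp_dyn_regret_eq_sum_round_regret:
  "exp_dyn_regret M \<pi> T v m = (\<Sum>t=1..T. round_regret M (\<pi> t (history v m t) (v t)) (v t) (m t))"
  unfolding exp_dyn_regret_def round_regret_def by (simp add: sum_subtractf)

context prob_space
begin

lemma integrable_random_bid: "random_bid M b \<Longrightarrow> integrable M b"
  unfolding random_bid_def by (intro integrable_const_bound[where B=1]) (auto intro!: AE_I2)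

lemma integrable_reward:
  assumes "random_bid M b"
  shows "integrable M (\<lambda>u. reward (b u) v m)"
proof (rule integrable_const_bound[where B="\<bar>v\<bar> + 1"])
  show "AE u in M. norm (reward (b u) v m) \<le> \<bar>v\<bar> + 1"
    using assms by (auto intro!: AE_I2 simp: random_bid_def reward_def)
  have "b \<in> borel_measurable M"
    using assms by (simp add: random_bid_def)
  then show "(\<lambda>u. reward (b u) v m) \<in> borel_measurable M"
    unfolding reward_def by measurable
qed

lemma round_regret_nonneg:
  assumes "random_bid M b" "0 \<le> m"
  shows "0 \<le> round_regret M b v m"
proof -
  have "(\<integral>u. reward (b u) v m \<partial>M) \<le> (\<integral>u. max (v - m) 0 \<partial>M)"
    using assms by (intro integral_mono integrable_reward) (auto simp: random_bid_def reward_def)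
  then show ?thesis by (simp add: round_regret_def prob_space)
qed

lemma round_regret_le_2:
  assumes "random_bid M b" "0 \<le> v" "v \<le> 1" "0 \<le> m"
  shows "round_regret M b v m \<le> 2"
proof -
  have "(\<integral>u. -1 \<partial>M) \<le> (\<integral>u. reward (b u) v m \<partial>M)"
    using assms by (intro integral_mono integrable_reward) (auto simp: random_bid_def reward_def)
  then show ?thesis using assms(2-4) by (simp add: round_regret_def prob_space)
qed

end

definition adversary_price :: "'u measure \<Rightarrow> ('u \<Rightarrow> real) \<Rightarrow> real" where
  "adversary_price M b = (if (\<integral>u. b u \<partial>M) \<ge> 1/4 then 0 else 1/2)"

lemma (in prob_space) round_regret_adversary_price:
  assumes "random_bid M b"
  shows "1/4 \<le> round_regret M b 1 (adversary_price M b)"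
proof (cases "(\<integral>u. b u \<partial>M) \<ge> 1/4")
  case True
  have "(\<integral>u. reward (b u) 1 0 \<partial>M) = (\<integral>u. 1 - b u \<partial>M)"
    using assms by (intro Bochner_Integration.integral_cong) (auto simp: random_bid_def reward_def)
  also have "\<dots> = 1 - (\<integral>u. b u \<partial>M)"
    using integrable_random_bid[OF assms] by (simp add: prob_space)
  finally show ?thesis using True by (simp add: round_regret_def adversary_price_def)
next
  case False
  have "(\<integral>u. reward (b u) 1 (1/2) \<partial>M) \<le> (\<integral>u. b u \<partial>M)"
    using assms by (intro integral_mono integrable_reward integrable_random_bid)
      (auto simp: random_bid_def reward_def)
  then show ?thesis using False by (simp add: round_regret_def adversary_price_def)
qed

fun adversary_prices ::
  "'u measure \<Rightarrow> (nat \<Rightarrow> (real \<times> real) list \<Rightarrow> real \<Rightarrow> 'u \<Rightarrow> real) \<Rightarrow> nat \<Rightarrow> nat \<Rightarrow> real" where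
  "adversary_prices M \<pi> K 0 = 0"
| "adversary_prices M \<pi> K (Suc n) =
     (if Suc n \<le> K
      then adversary_price M (\<pi> (Suc n) (map (\<lambda>s. (1, adversary_prices M \<pi> K s)) [1..<Suc n]) 1)
      else adversary_prices M \<pi> K n)"

lemma adversary_prices_bounds: "0 \<le> adversary_prices M \<pi> K t \<and> adversary_prices M \<pi> K t \<le> 1"
  by (induction t) (auto simp: adversary_price_def)

lemma adversary_prices_adaptive:
  "1 \<le> t \<Longrightarrow> t \<le> K \<Longrightarrow> adversary_prices M \<pi> K t =
     adversary_price M (\<pi> t (history (\<lambda>_. 1) (adversary_prices M \<pi> K) t) 1)"
  by (cases t) (auto simp: history_def)

lemma adversary_prices_changes:
  "{t\<in>{2..T}. adversary_prices M \<pi> K t \<noteq> adversary_prices M \<pi> K (t - 1)} \<subseteq> {2..K}"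
proof
  fix t assume t: "t \<in> {t\<in>{2..T}. adversary_prices M \<pi> K t \<noteq> adversary_prices M \<pi> K (t - 1)}"
  then obtain n where "t = Suc n" by (cases t) auto
  with t show "t \<in> {2..K}" by (cases "t \<le> K") auto
qed

lemma adversary_prices_env_set: "(\<lambda>_. 1, adversary_prices M \<pi> L) \<in> env_set T L"
proof -
  have "card {t\<in>{2..T}. adversary_prices M \<pi> L t \<noteq> adversary_prices M \<pi> L (t - 1)} \<le> card {2..L}"
    by (intro card_mono adversary_prices_changes) simp
  then show ?thesis
    using adversary_prices_bounds[of M \<pi> L] by (auto simp: env_set_def)
qed

lemma exp_dyn_regret_adversary_prices:
  assumes "prob_space M" "admissible M \<pi>" "L \<le> T"
  shows "real L / 4 \<le> exp_dyn_regret M \<pi> T (\<lambda>_. 1) (adversary_prices M \<pi> L)"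
proof -
  interpret prob_space M by fact
  define f where "f t = round_regret M (\<pi> t (history (\<lambda>_. 1) (adversary_prices M \<pi> L) t) 1) 1
    (adversary_prices M \<pi> L t)" for t
  have "real L / 4 = (\<Sum>t=1..L. 1/4)" by simp
  also have "\<dots> \<le> (\<Sum>t=1..L. f t)"
  proof (rule sum_mono)
    fix t assume "t \<in> {1..L}"
    then have "adversary_prices M \<pi> L t =
        adversary_price M (\<pi> t (history (\<lambda>_. 1) (adversary_prices M \<pi> L) t) 1)"
      by (intro adversary_prices_adaptive) auto
    then show "1/4 \<le> f t"
      unfolding f_def by (metis round_regret_adversary_price admissible_random_bid assms(2))
  qed
  also have "\<dots> \<le> (\<Sum>t=1..T. f t)"
    using assms(3) adversary_prices_bounds
    by (intro sum_mono2) (auto simp: f_def intro!: round_regret_nonneg admissible_random_bid[OF assms(2)])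
  finally show ?thesis by (simp add: exp_dyn_regret_eq_sum_round_regret f_def)
qed

lemma exp_dyn_regret_le:
  assumes "prob_space M" "admissible M \<pi>" "(v, m) \<in> env_set T L"
  shows "exp_dyn_regret M \<pi> T v m \<le> 2 * real T"
proof -
  interpret prob_space M by fact
  have "exp_dyn_regret M \<pi> T v m \<le> (\<Sum>t=1..T. 2)"
    unfolding exp_dyn_regret_eq_sum_round_regret
    using assms(3) round_regret_le_2 admissible_random_bid[OF assms(2)]
    by (intro sum_mono) (auto simp: env_set_def)
  then show ?thesis by simp
qed

theorem theorem5:
  fixes M :: "'u measure" and T L :: nat
  assumes "prob_space M"
    and "1 \<le> L" and "L \<le> T" and "3 * L \<le> T"
    and "admissible M \<pi>"
  shows "(SUP vm \<in> env_set T L. exp_dyn_regret M \<pi> T (fst vm) (snd vm)) \<ge> real L / 8"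
proof -
  let ?regret = "\<lambda>vm. exp_dyn_regret M \<pi> T (fst vm) (snd vm)"
  have "bdd_above (?regret ` env_set T L)"
    using exp_dyn_regret_le[OF assms(1,5)] by (intro bdd_aboveI2[where M="2 * real T"]) auto
  then have "?regret (\<lambda>_. 1, adversary_prices M \<pi> L) \<le> (SUP vm \<in> env_set T L. ?regret vm)"
    by (rule cSUP_upper[OF adversary_prices_env_set])
  moreover have "real L / 4 \<le> ?regret (\<lambda>_. 1, adversary_prices M \<pi> L)"
    using exp_dyn_regret_adversary_prices[OF assms(1,5,3)] by simp
  ultimately show ?thesis by simp
qed

end
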